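(* In the setting below: (i) If $x\in M_1$, then $\mathcal{P}(x)\cap M\subseteq M_1$, hence $\mathcal{P}(x)\cap M=\mathcal{P}(x)\cap M_1$. In particular $\mathcal{P}(A)\cap M=M_1$. (ii) For every ordinal $\alpha\geq1$, if $x\in M_{\alpha+1}$, then $\mathcal{P}(x)\cap M\subseteq M_{\alpha+1}$, hence $\mathcal{P}(x)\cap M=\mathcal{P}(x)\cap M_{\alpha+1}$. In particular $\mathcal{P}(M_\alpha)\cap M=M_{\alpha+1}$.
   Context: Work in ZFA (ZF with a set $A$ of atoms, i.e. urelements that have no elements), extended by a primitive binary relation $\preccurlyeq$ on $A$, with Separation and Replacement holding for formulas mentioning $\preccurlyeq$. $A$ is an infinite set of atoms and $\preccurlyeq$ is a pre-ordering (reflexive, transitive) on $A$ with no minimal elements: for every $a\in A$ there is $b\in A$ with $b\preccurlyeq a$ and not $a\preccurlyeq b$. For $a\in A$, $pr(a)=\{b\in A:b\preccurlyeq a\}$; $LO(A,\preccurlyeq)$ is the set of nonempty $x\subseteq A$ with $pr(a)\subseteq x$ for all $a\in x$. For a set $X$ of sets, $LO(X,\subseteq)$ is the set of nonempty $x\subseteq X$ such that for every $y\in x$ and every $z\in X$ with $z\subseteq y$, $z\in x$. The magmatic hierarchy: $M_1=LO(A,\preccurlyeq)$; $M_{\alpha+1}=LO(M_\alpha,\subseteq)$ for $\alpha\geq1$; $M_\alpha=\bigcup_{1\leq\beta<\alpha}M_\beta$ for limit $\alpha$; $M=\bigcup_{\alpha\geq1}M_\alpha$. *)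

theory Defs
  imports Main
begin

text \<open>An abstract ZFA-style universe: objects of type 'u, the membership of an object
  is given by elts :: 'u => 'u set; A is the set of atoms (objects without elements);
  all other objects are sets, and they are extensional.\<close>

definition zfa_universe :: "('u \<Rightarrow> 'u set) \<Rightarrow> 'u set \<Rightarrow> bool" where
  "zfa_universe elts A \<longleftrightarrow>
     (\<forall>a\<in>A. elts a = {}) \<and>
     (\<forall>x y. x \<notin> A \<longrightarrow> y \<notin> A \<longrightarrow> elts x = elts y \<longrightarrow> x = y)"

definition pr :: "('u \<Rightarrow> 'u \<Rightarrow> bool) \<Rightarrow> 'u set \<Rightarrow> 'u \<Rightarrow> 'u set" where
  "pr le A a = {b \<in> A. le b a}"

definition LO_pre :: "('u \<Rightarrow> 'u \<Rightarrow> bool) \<Rightarrow> 'u set \<Rightarrow> 'u set set" where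
  "LO_pre le A = {x. x \<noteq> {} \<and> x \<subseteq> A \<and> (\<forall>a\<in>x. pr le A a \<subseteq> x)}"

definition LO_sub :: "('u \<Rightarrow> 'u set) \<Rightarrow> 'u set \<Rightarrow> 'u set set" where
  "LO_sub elts X = {x. x \<noteq> {} \<and> x \<subseteq> X \<and>
      (\<forall>y\<in>x. \<forall>z\<in>X. elts z \<subseteq> elts y \<longrightarrow> z \<in> x)}"

definition obj_of :: "('u \<Rightarrow> 'u set) \<Rightarrow> 'u set \<Rightarrow> 'u set set \<Rightarrow> 'u set" where
  "obj_of elts A S = {x. x \<notin> A \<and> elts x \<in> S}"

definition Pw :: "('u \<Rightarrow> 'u set) \<Rightarrow> 'u set \<Rightarrow> 'u set \<Rightarrow> 'u set" where
  "Pw elts A S = {y. y \<notin> A \<and> elts y \<subseteq> S}"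

definition is_succ :: "'i::wellorder \<Rightarrow> 'i \<Rightarrow> bool" where
  "is_succ i j \<longleftrightarrow> i < j \<and> (\<forall>k. i < k \<longrightarrow> j \<le> k)"

text \<open>The magmatic hierarchy indexed by a well-ordered type 'i: the least index plays
  the role of the ordinal 1, successor indices of successor ordinals, and the remaining
  indices of limit ordinals.\<close>
definition magmatic_hierarchy ::
  "('u \<Rightarrow> 'u set) \<Rightarrow> 'u set \<Rightarrow> ('u \<Rightarrow> 'u \<Rightarrow> bool) \<Rightarrow> ('i::wellorder \<Rightarrow> 'u set) \<Rightarrow> bool" where
  "magmatic_hierarchy elts A le M \<longleftrightarrow>
     (\<forall>i. (\<forall>k. i \<le> k) \<longrightarrow> M i = obj_of elts A (LO_pre le A)) \<and>
     (\<forall>i j. is_succ i j \<longrightarrow> M j = obj_of elts A (LO_sub elts (M i))) \<and>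
     (\<forall>j. \<not> (\<forall>k. j \<le> k) \<longrightarrow> \<not> (\<exists>i. is_succ i j) \<longrightarrow> M j = (\<Union>k\<in>{k. k < j}. M k))"

end

theory Submission
  imports Defs
begin

text \<open>Every member of the hierarchy is born either at the least level, as a set of atoms,
  or at a successor level \<open>M\<^sub>p\<^sub>+\<^sub>1\<close>, as a downward closed subset of \<open>M\<^sub>p\<close>.
  Call \<open>z\<close> downward closed in \<open>M\<close> if every level containing \<open>z\<close> contains every
  \<open>w \<in> M\<close> with \<open>w \<subseteq> z\<close>. A set inherits this property from its elements: at the least
  level because a member of \<open>M\<close> consisting of atoms is born there, at a successor level
  \<open>M\<^sub>i\<^sub>+\<^sub>1\<close> because \<open>w\<close>, born as a downward closed subset of some \<open>M\<^sub>p\<close>, has downward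
  closed elements and is therefore also a downward closed subset of \<open>M\<^sub>i\<close>, and at limits
  trivially. As elements of members of \<open>M\<^sub>n\<close> are atoms or lie in earlier levels, every
  member of \<open>M\<close> is downward closed, which is the proposition.\<close>

locale magmatic =
  fixes elts :: "'u \<Rightarrow> 'u set" and A :: "'u set" and le :: "'u \<Rightarrow> 'u \<Rightarrow> bool"
    and M :: "'i::wellorder \<Rightarrow> 'u set"
  assumes hierarchy: "magmatic_hierarchy elts A le M"
begin

lemma M_least: "(\<forall>k. i \<le> k) \<Longrightarrow> M i = obj_of elts A (LO_pre le A)"
  using hierarchy unfolding magmatic_hierarchy_def by blast

lemma M_succ: "is_succ i j \<Longrightarrow> M j = obj_of elts A (LO_sub elts (M i))"
  using hierarchy unfolding magmatic_hierarchy_def by blast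

lemma level_cases:
  obtains (least) "M j = obj_of elts A (LO_pre le A)"
  | (succ) i where "is_succ i j" "M j = obj_of elts A (LO_sub elts (M i))"
  | (limit) "M j = (\<Union>k\<in>{k. k < j}. M k)"
proof (cases "\<forall>k. j \<le> k")
  case True
  then show ?thesis by (intro least M_least)
next
  case not_least: False
  show ?thesis
  proof (cases "\<exists>i. is_succ i j")
    case True
    then show ?thesis using succ M_succ by blast
  next
    case False
    then show ?thesis
      using hierarchy not_least limit unfolding magmatic_hierarchy_def by simp
  qed
qed

lemma mem_M_cases:
  "x \<in> M n \<Longrightarrow>
    x \<in> obj_of elts A (LO_pre le A) \<or> (\<exists>p<n. x \<in> obj_of elts A (LO_sub elts (M p)))"
proof (induction n rule: less_induct)
  case (less n)
  show ?case
  proof (cases rule: level_cases[of n])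
    case least
    then show ?thesis using less.prems by simp
  next
    case (succ i)
    then show ?thesis using less.prems by (auto simp: is_succ_def)
  next
    case limit
    then show ?thesis using less by (blast intro: less_trans)
  qed
qed

lemma M_not_atom: "x \<in> M n \<Longrightarrow> x \<notin> A"
  using mem_M_cases by (auto simp: obj_of_def)

lemma M_elts_nonempty: "x \<in> M n \<Longrightarrow> elts x \<noteq> {}"
  using mem_M_cases unfolding obj_of_def LO_pre_def LO_sub_def by blast

lemma elts_mem_M: "x \<in> M n \<Longrightarrow> u \<in> elts x \<Longrightarrow> u \<in> A \<or> (\<exists>p<n. u \<in> M p)"
  using mem_M_cases unfolding obj_of_def LO_pre_def LO_sub_def by blast

lemma mem_least_levelI:
  assumes "w \<in> \<Union>(range M)" and "elts w \<subseteq> A"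
  shows "w \<in> obj_of elts A (LO_pre le A)"
proof (rule ccontr)
  assume "w \<notin> obj_of elts A (LO_pre le A)"
  then obtain p where "elts w \<subseteq> M p"
    using assms(1) mem_M_cases by (fastforce simp: obj_of_def LO_sub_def)
  moreover obtain u where "u \<in> elts w"
    using assms(1) M_elts_nonempty by blast
  ultimately show False
    using assms(2) M_not_atom by blast
qed

definition down_closed :: "'u \<Rightarrow> bool" where
  "down_closed z \<longleftrightarrow> (\<forall>k. z \<in> M k \<longrightarrow> (\<forall>w\<in>\<Union>(range M). elts w \<subseteq> elts z \<longrightarrow> w \<in> M k))"

lemma down_closed_atom: "a \<in> A \<Longrightarrow> down_closed a"
  using M_not_atom by (auto simp: down_closed_def)

lemma mem_succ_levelI:
  assumes ij: "is_succ i j" and y: "y \<in> \<Union>(range M)" and y_sub: "elts y \<subseteq> M i"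
    and closed: "\<forall>u\<in>elts y. down_closed u"
  shows "y \<in> M j"
proof -
  obtain u0 where "u0 \<in> elts y"
    using y M_elts_nonempty by blast
  then have "\<not> elts y \<subseteq> A"
    using y_sub M_not_atom by blast
  then obtain p where born: "y \<in> obj_of elts A (LO_sub elts (M p))"
    using y mem_M_cases by (fastforce simp: obj_of_def LO_pre_def)
  have "v \<in> elts y" if "u \<in> elts y" "v \<in> M i" "elts v \<subseteq> elts u" for u v
  proof -
    have "u \<in> M p"
      using born \<open>u \<in> elts y\<close> by (auto simp: obj_of_def LO_sub_def)
    moreover have "down_closed u"
      using closed \<open>u \<in> elts y\<close> by blast
    ultimately have "v \<in> M p"
      using that(2,3) unfolding down_closed_def by blast
    then show ?thesis
      using born that(1,3) unfolding obj_of_def LO_sub_def by blast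
  qed
  then show ?thesis
    using born y_sub \<open>u0 \<in> elts y\<close>
    unfolding M_succ[OF ij] obj_of_def LO_sub_def by blast
qed

lemma down_closed_if_elts:
  assumes closed: "\<forall>u\<in>elts z. down_closed u"
  shows "down_closed z"
  unfolding down_closed_def
proof (intro allI impI ballI)
  fix k w
  assume "z \<in> M k" "w \<in> \<Union>(range M)" "elts w \<subseteq> elts z"
  then show "w \<in> M k"
  proof (induction k rule: less_induct)
    case (less k)
    show ?case
    proof (cases rule: level_cases[of k])
      case least
      then have "elts z \<subseteq> A"
        using less.prems(1) by (simp add: obj_of_def LO_pre_def)
      then have "w \<in> obj_of elts A (LO_pre le A)"
        using mem_least_levelI less.prems(2,3) by blast
      then show ?thesis using least by simp
    next
      case (succ i)
      then have "elts w \<subseteq> M i"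
        using less.prems(1,3) by (auto simp: obj_of_def LO_sub_def)
      then show ?thesis
        using mem_succ_levelI[OF succ(1) less.prems(2)] less.prems(3) closed by blast
    next
      case limit
      then show ?thesis using less by blast
    qed
  qed
qed

lemma down_closed_M: "z \<in> M n \<Longrightarrow> down_closed z"
proof (induction n arbitrary: z rule: less_induct)
  case (less n)
  have "down_closed u" if "u \<in> elts z" for u
    using elts_mem_M[OF less.prems that]
  proof
    assume "\<exists>p<n. u \<in> M p"
    then show ?thesis
      using less.IH by blast
  qed (rule down_closed_atom)
  then show ?case
    using down_closed_if_elts by blast
qed

lemma Pw_inter_M_subset: "x \<in> M k \<Longrightarrow> Pw elts A (elts x) \<inter> \<Union>(range M) \<subseteq> M k"
  using down_closed_M unfolding down_closed_def Pw_def by blast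

lemma Pw_inter_least:
  assumes "\<forall>k. i \<le> k"
  shows "Pw elts A A \<inter> \<Union>(range M) = M i"
proof
  show "Pw elts A A \<inter> \<Union>(range M) \<subseteq> M i"
    using mem_least_levelI by (auto simp: M_least[OF assms] Pw_def)
  have "M i \<subseteq> Pw elts A A"
    by (auto simp: M_least[OF assms] Pw_def obj_of_def LO_pre_def)
  then show "M i \<subseteq> Pw elts A A \<inter> \<Union>(range M)"
    by blast
qed

lemma Pw_inter_succ: "is_succ i j \<Longrightarrow> Pw elts A (M i) \<inter> \<Union>(range M) = M j"
proof
  assume ij: "is_succ i j"
  show "Pw elts A (M i) \<inter> \<Union>(range M) \<subseteq> M j"
  proof
    fix y
    assume y: "y \<in> Pw elts A (M i) \<inter> \<Union>(range M)"
    then have "elts y \<subseteq> M i"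
      by (simp add: Pw_def)
    then show "y \<in> M j"
      using mem_succ_levelI[OF ij] y down_closed_M by blast
  qed
  have "M j \<subseteq> Pw elts A (M i)"
    by (auto simp: M_succ[OF ij] Pw_def obj_of_def LO_sub_def)
  then show "M j \<subseteq> Pw elts A (M i) \<inter> \<Union>(range M)"
    by blast
qed

end

theorem proposition4p5:
  fixes elts :: "'u \<Rightarrow> 'u set" and A :: "'u set" and le :: "'u \<Rightarrow> 'u \<Rightarrow> bool"
    and M :: "'i::wellorder \<Rightarrow> 'u set"
  assumes univ: "zfa_universe elts A"
    and infA: "infinite A"
    and refl: "\<forall>a\<in>A. le a a"
    and trans: "\<forall>a\<in>A. \<forall>b\<in>A. \<forall>c\<in>A. le a b \<longrightarrow> le b c \<longrightarrow> le a c"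
    and nomin: "\<forall>a\<in>A. \<exists>b\<in>A. le b a \<and> \<not> le a b"
    and hier: "magmatic_hierarchy elts A le M"
  shows
    "(\<forall>i0. (\<forall>k. i0 \<le> k) \<longrightarrow>
        (\<forall>x\<in>M i0. Pw elts A (elts x) \<inter> (\<Union>(range M)) \<subseteq> M i0 \<and>
                   Pw elts A (elts x) \<inter> (\<Union>(range M)) = Pw elts A (elts x) \<inter> M i0) \<and>
        Pw elts A A \<inter> (\<Union>(range M)) = M i0) \<and>
     (\<forall>i j. is_succ i j \<longrightarrow>
        (\<forall>x\<in>M j. Pw elts A (elts x) \<inter> (\<Union>(range M)) \<subseteq> M j \<and>
                  Pw elts A (elts x) \<inter> (\<Union>(range M)) = Pw elts A (elts x) \<inter> M j) \<and>
        Pw elts A (M i) \<inter> (\<Union>(range M)) = M j)"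
proof -
  interpret magmatic elts A le M
    using hier by (rule magmatic.intro)
  show ?thesis
    using Pw_inter_M_subset Pw_inter_least Pw_inter_succ by blast
qed

end
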